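(* For every integer $n\geqslant1$, \[ \sum_{k=0}^{n-1}(-1)^{n+k}\frac{(2n+1)(2k+1)}{(n-k)^{2}(n+k+1)^{2}} =-\frac{\pi^{2}}{12}+\psi_{1}(2n+1)-\frac{1}{2}\psi_{1}(n+1). \]
   Context: $\psi_1$ is the trigamma function, $\psi_1(z)=\frac{\mathrm{d}^2}{\mathrm{d}z^2}\ln\Gamma(z)$. *)

theory Defs
  imports "HOL-Analysis.Analysis"
begin

end

theory Submission
  imports Defs
begin

text \<open>
  Partial fractions split the k-th summand into the two terms
  \<open>(-1)^(j+1)/(j+1)^2\<close> with \<open>j = n-1-k\<close> and \<open>j = n+k\<close>, so the left-hand side is
  the alternating partial sum of \<open>1/j^2\<close> up to \<open>2n\<close>. Separating even and odd
  terms, that sum equals \<open>-H\<^sub>2(2n) + H\<^sub>2(n)/2\<close> with \<open>H\<^sub>2(m) = \<Sum>j=1..m. 1/j^2\<close>,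
  and \<open>\<psi>\<^sub>1(m+1) = \<pi>^2/6 - H\<^sub>2(m)\<close>.
\<close>

lemma Polygamma_1_one: "Polygamma 1 (1::real) = pi^2 / 6"
proof -
  have "(\<lambda>k. inverse ((1 + of_nat k) ^ Suc 1)) sums ((-1) ^ Suc 1 * Polygamma 1 (1::real) / fact 1)"
    by (rule Polygamma_LIMSEQ) auto
  then have "(\<lambda>k::nat. 1 / (real k + 1)^2) sums Polygamma 1 (1::real)"
    by (simp add: inverse_eq_divide add.commute power2_eq_square)
  moreover have "(\<lambda>k::nat. 1 / (real k + 1)^2) sums (pi^2 / 6)"
    using inverse_squares_sums by (simp add: add.commute)
  ultimately show ?thesis
    by (rule sums_unique2)
qed

lemma Polygamma_1_of_nat_plus_one:
  "Polygamma 1 (real m + 1) = pi^2 / 6 - (\<Sum>k<m. 1 / (real k + 1)^2)"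
proof -
  have "Polygamma 1 (1 + of_nat m) =
          Polygamma 1 (1::real) + (-1) ^ 1 * fact 1 * (\<Sum>k<m. 1 / (1 + of_nat k) ^ Suc 1)"
    by (rule Polygamma_plus_of_nat) auto
  then show ?thesis
    using Polygamma_1_one by (simp add: add.commute power2_eq_square)
qed

lemma sum_lessThan_add:
  fixes g :: "nat \<Rightarrow> 'a::comm_monoid_add"
  shows "(\<Sum>k<n+m. g k) = (\<Sum>k<n. g k) + (\<Sum>k<m. g (n + k))"
  by (induction m) (simp_all add: add.assoc)

definition alternating_inverse_square :: "nat \<Rightarrow> real" where
  "alternating_inverse_square j = (-1) ^ (j + 1) / (real j + 1)^2"

lemma sum_alternating_inverse_square:
  "(\<Sum>j<2*n. alternating_inverse_square j) =
     - (\<Sum>j<2*n. 1 / (real j + 1)^2) + (\<Sum>j<n. 1 / (real j + 1)^2) / 2"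
proof -
  have pair: "(\<Sum>j\<in>{m*2..<m*2+2}. alternating_inverse_square j) =
                - (\<Sum>j\<in>{m*2..<m*2+2}. 1 / (real j + 1)^2) + 1 / (real m + 1)^2 / 2" for m
  proof -
    have "{m*2..<m*2+2} = {2*m, 2*m+1}" by auto
    moreover have "(2 * real m + 2)^2 = 4 * (real m + 1)^2"
      by (simp add: power2_eq_square algebra_simps)
    ultimately show ?thesis
      by (simp add: alternating_inverse_square_def field_simps)
  qed
  have "(\<Sum>j<2*n. alternating_inverse_square j) =
          (\<Sum>m<n. \<Sum>j\<in>{m*2..<m*2+2}. alternating_inverse_square j)"
    unfolding mult.commute[of 2 n] by (rule sum.nat_group[symmetric])
  also have "\<dots> = (\<Sum>m<n. - (\<Sum>j\<in>{m*2..<m*2+2}. 1 / (real j + 1)^2) + 1 / (real m + 1)^2 / 2)"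
    by (rule sum.cong[OF refl pair])
  also have "\<dots> = - (\<Sum>j<2*n. 1 / (real j + 1)^2) + (\<Sum>j<n. 1 / (real j + 1)^2) / 2"
    unfolding sum.distrib sum_negf sum_divide_distrib mult.commute[of 2 n] sum.nat_group ..
  finally show ?thesis .
qed

lemma inverse_square_diff:
  fixes a b s :: "'a::field"
  assumes "a \<noteq> 0" "b \<noteq> 0"
  shows "s * ((a + b) * (b - a)) / (a^2 * b^2) = s / a^2 - s / b^2"
  using assms by (simp add: field_simps power2_eq_square)

lemma summand_partial_fractions:
  assumes "k < n"
  shows "(-1::real)^(n+k) * ((2*real n+1)*(2*real k+1)) / ((real n - real k)^2 * (real n + real k + 1)^2)
         = alternating_inverse_square (n - Suc k) + alternating_inverse_square (n + k)"
proof -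
  have nonzero: "real n - real k \<noteq> 0" "real n + real k + 1 \<noteq> 0"
    using assms by linarith+
  have "(-1::real)^(n+k) = (-1)^((n-k) + 2*k)"
    using assms by (simp add: algebra_simps)
  then have sign: "(-1::real)^(n+k) = (-1)^(n-k)"
    by (simp add: power_add)
  have factor: "(2*real n+1)*(2*real k+1) =
      ((real n - real k) + (real n + real k + 1)) * ((real n + real k + 1) - (real n - real k))"
    by (simp add: algebra_simps)
  have "alternating_inverse_square (n - Suc k) = (-1)^(n+k) / (real n - real k)^2"
    using assms by (simp add: alternating_inverse_square_def sign Suc_diff_Suc of_nat_diff)
  moreover have "alternating_inverse_square (n + k) = - ((-1)^(n+k) / (real n + real k + 1)^2)"
    by (simp add: alternating_inverse_square_def)
  moreover have "(-1::real)^(n+k) * ((2*real n+1)*(2*real k+1)) / ((real n - real k)^2 * (real n + real k + 1)^2)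
      = (-1)^(n+k) / (real n - real k)^2 - (-1)^(n+k) / (real n + real k + 1)^2"
    unfolding factor by (rule inverse_square_diff[OF nonzero])
  ultimately show ?thesis
    by simp
qed

theorem mainTheorem8:
  fixes n :: nat
  assumes "n \<ge> 1"
  shows "(\<Sum>k=0..n-1. (-1::real)^(n+k) * ((2*real n+1)*(2*real k+1))
            / ((real n - real k)^2 * (real n + real k + 1)^2))
         = - (pi^2 / 12) + Polygamma 1 (2*real n + 1) - (1/2) * Polygamma 1 (real n + 1)"
proof -
  have "{0..n-1} = {..<n}" using assms by auto
  then have "(\<Sum>k=0..n-1. (-1::real)^(n+k) * ((2*real n+1)*(2*real k+1))
            / ((real n - real k)^2 * (real n + real k + 1)^2))
        = (\<Sum>k<n. alternating_inverse_square (n - Suc k)) + (\<Sum>k<n. alternating_inverse_square (n + k))"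
    by (simp add: summand_partial_fractions sum.distrib)
  also have "\<dots> = (\<Sum>j<2*n. alternating_inverse_square j)"
    by (simp add: sum.nat_diff_reindex sum_lessThan_add mult_2)
  also have "\<dots> = - (\<Sum>j<2*n. 1 / (real j + 1)^2) + (\<Sum>j<n. 1 / (real j + 1)^2) / 2"
    by (rule sum_alternating_inverse_square)
  finally have "(\<Sum>k=0..n-1. (-1::real)^(n+k) * ((2*real n+1)*(2*real k+1))
            / ((real n - real k)^2 * (real n + real k + 1)^2))
        = - (\<Sum>j<2*n. 1 / (real j + 1)^2) + (\<Sum>j<n. 1 / (real j + 1)^2) / 2" .
  moreover have "Polygamma 1 (2*real n + 1) = pi^2 / 6 - (\<Sum>j<2*n. 1 / (real j + 1)^2)"
    using Polygamma_1_of_nat_plus_one[of "2*n"] by simp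
  ultimately show ?thesis
    using Polygamma_1_of_nat_plus_one[of n] by linarith
qed

end
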